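(* Let $n\ge4$ be even, $p\ge n+1$ an integer, $c_1$ a positive integer, $a_k=pc_k$, $c_{k+1}=p^2c_k$, $\Theta_k=\Theta_{a_k,c_k}$, and $b_{k,i}=|\Theta_1\cdots\Theta_ke_i|$. Then for every $k\ge1$, $$\prod_{j=1}^{k-1}c_j<b_{k,1}<\prod_{j=1}^k 2a_j,\qquad \prod_{j=1}^{k}c_j<b_{k,n}<\prod_{j=1}^k 2a_j.$$
   Context: For positive integers $a,c$, $\Theta_{a,c}$ is the $n\times n$ matrix with row $1=(1,c,\dots,c)$, row $n=(1,c+1,\dots,c+1)$, and for $1\le i\le(n-2)/2$: row $2i$ has $0$ in column 1, $2$ in columns $2i$ and $2i+1$, and $1$ in the other columns among $2,\dots,n$; row $2i+1$ has $a$ in column $2i$, $a+1$ in column $2i+1$, $0$ elsewhere. For a vector $v$, $|v|$ is the sum of its entries; $e_i$ is the $i$-th standard basis vector. *)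

theory Defs
  imports "Jordan_Normal_Form.Matrix"
begin

text \<open>Theta n a c: the n x n integer matrix Theta_{a,c} of the paper.
  The paper uses 1-based indices r,s in {1..n}; JNF matrices are 0-based,
  so entry (i,j) corresponds to row r = i+1, column s = j+1.\<close>
definition Theta :: "nat \<Rightarrow> int \<Rightarrow> int \<Rightarrow> int mat" where
  "Theta n a c = mat n n (\<lambda>(i,j). let r = i + 1; s = j + 1 in
     if r = 1 then (if s = 1 then 1 else c)
     else if r = n then (if s = 1 then 1 else c + 1)
     else if even r then (if s = 1 then 0 else if s = r \<or> s = r + 1 then 2 else 1)
     else (if s = r - 1 then a else if s = r then a + 1 else 0))"

fun thetaProd :: "nat \<Rightarrow> (nat \<Rightarrow> int) \<Rightarrow> (nat \<Rightarrow> int) \<Rightarrow> nat \<Rightarrow> int mat" where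
  "thetaProd n a c 0 = 1\<^sub>m n"
| "thetaProd n a c (Suc k) = thetaProd n a c k * Theta n (a (Suc k)) (c (Suc k))"

definition vsum :: "int vec \<Rightarrow> int" where
  "vsum v = (\<Sum>i<dim_vec v. v $ i)"

text \<open>b_{k,i} = |Theta_1 ... Theta_k e_i| (1-based i, e_i = unit_vec n (i-1)).\<close>
definition bval :: "nat \<Rightarrow> (nat \<Rightarrow> int) \<Rightarrow> (nat \<Rightarrow> int) \<Rightarrow> nat \<Rightarrow> nat \<Rightarrow> int" where
  "bval n a c k i = vsum (thetaProd n a c k *\<^sub>v unit_vec n (i - 1))"

end

theory Submission
  imports Defs
begin

text \<open>
  Let x_k(s) be the s-th column sum of Theta_1 \<cdots> Theta_k, so that b_{k,s} = x_k(s) and, as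
  row vectors, x_{k+1} = x_k Theta_{k+1}. The first column of Theta_{a,c} has ones in rows 1 and n
  and zeros elsewhere, so x_{k+1}(1) = x_k(1) + x_k(n). The last column has c + 1 on the diagonal
  and entries at most c + 1, so (c_{k+1} + 1) x_k(n) \<le> x_{k+1}(n) \<le> n (c_{k+1} + 1) max x_k.
  Every column of Theta_{a,c} sums to at most a + 2c + 2n + 3, which is at most 2a as soon as
  c \<ge> p^2, i.e. from the second factor on; hence max x_k \<le> 2 \<Prod> 2a_j, and the four bounds
  follow.
\<close>

definition col_sum :: "'a::comm_monoid_add mat \<Rightarrow> nat \<Rightarrow> 'a" where
  "col_sum A j = (\<Sum>i<dim_row A. A $$ (i, j))"

lemma col_sum_one_mat: "j < n \<Longrightarrow> col_sum (1\<^sub>m n :: 'a::semiring_1 mat) j = 1"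
  unfolding col_sum_def by (simp add: sum.delta)

lemma col_sum_mult:
  fixes A B :: "'a::comm_semiring_0 mat"
  assumes "dim_col A = dim_row B" "j < dim_col B"
  shows "col_sum (A * B) j = (\<Sum>i<dim_col A. col_sum A i * B $$ (i, j))"
proof -
  have "col_sum (A * B) j = (\<Sum>l<dim_row A. \<Sum>i<dim_col A. A $$ (l, i) * B $$ (i, j))"
    unfolding col_sum_def using assms
    by (auto simp: scalar_prod_def lessThan_atLeast0 intro!: sum.cong)
  also have "\<dots> = (\<Sum>i<dim_col A. col_sum A i * B $$ (i, j))"
    unfolding col_sum_def by (subst sum.swap) (simp add: sum_distrib_right)
  finally show ?thesis .
qed

lemma col_sum_mult_ge:
  fixes A B :: "'a::linordered_semidom mat"
  assumes "dim_col A = dim_row B" "j < dim_col B" "i < dim_col A"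
    and "\<And>l. l < dim_col A \<Longrightarrow> 0 \<le> col_sum A l"
    and "\<And>l. l < dim_row B \<Longrightarrow> 0 \<le> B $$ (l, j)"
  shows "col_sum A i * B $$ (i, j) \<le> col_sum (A * B) j"
  unfolding col_sum_mult[OF assms(1,2)] using assms(1,3-5)
  by (intro member_le_sum) auto

lemma col_sum_mult_le:
  fixes A B :: "'a::linordered_semidom mat"
  assumes "dim_col A = dim_row B" "j < dim_col B"
    and "\<And>l. l < dim_col A \<Longrightarrow> 0 \<le> col_sum A l \<and> col_sum A l \<le> M"
    and "\<And>l. l < dim_row B \<Longrightarrow> 0 \<le> B $$ (l, j)"
  shows "col_sum (A * B) j \<le> M * col_sum B j"
  unfolding col_sum_mult[OF assms(1,2)] using assms(1,3,4)
  by (auto simp: col_sum_def sum_distrib_left intro!: sum_mono mult_right_mono)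

lemma dim_Theta [simp]: "dim_row (Theta n a c) = n" "dim_col (Theta n a c) = n"
  unfolding Theta_def by simp_all

lemma dim_thetaProd [simp]: "dim_row (thetaProd n a c k) = n" "dim_col (thetaProd n a c k) = n"
  by (induction k) simp_all

lemma bval_eq_col_sum:
  "1 \<le> i \<Longrightarrow> i \<le> n \<Longrightarrow> bval n a c k i = col_sum (thetaProd n a c k) (i - 1)"
  unfolding bval_def vsum_def col_sum_def by (intro sum.cong) (auto simp: row_def)

lemma Theta_first_col: "j < n \<Longrightarrow> Theta n a c $$ (j, 0) = (if j = 0 \<or> j = n - 1 then 1 else 0)"
  unfolding Theta_def by auto

lemma Theta_nonneg: "0 \<le> a \<Longrightarrow> 0 \<le> c \<Longrightarrow> i < n \<Longrightarrow> j < n \<Longrightarrow> 0 \<le> Theta n a c $$ (i, j)"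
  unfolding Theta_def by auto

lemma Theta_last_col_le: "1 \<le> c \<Longrightarrow> i < n \<Longrightarrow> Theta n a c $$ (i, n - 1) \<le> c + 1"
  unfolding Theta_def by auto

lemma Theta_last_last: "2 \<le> n \<Longrightarrow> Theta n a c $$ (n - 1, n - 1) = c + 1"
  unfolding Theta_def by auto

lemma col_sum_Theta_last_le:
  assumes "1 \<le> c" shows "col_sum (Theta n a c) (n - 1) \<le> int n * (c + 1)"
proof -
  have "col_sum (Theta n a c) (n - 1) \<le> of_nat (card {..<n}) * (c + 1)"
    unfolding col_sum_def dim_Theta using assms
    by (intro sum_bounded_above Theta_last_col_le) auto
  then show ?thesis by simp
qed

lemma col_sum_Theta_le:
  assumes "0 \<le> a" "0 \<le> c" "j < n"
  shows "col_sum (Theta n a c) j \<le> a + 2 * c + 2 * int n + 3"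
proof -
  define t where "t = (if even j then j else j + 1)"
  define h where "h i = (if i = 0 then c + 1 else 0) + (if i = n - 1 then c + 1 else 0) + 2
    + (if i = t then a + 1 else 0)" for i
  \<comment> \<open>t is the only row of the form (0, \<dots>, a, a + 1, \<dots>, 0) meeting column j\<close>
  have "Theta n a c $$ (i, j) \<le> h i" if "i < n" for i
    using assms that unfolding Theta_def h_def t_def by (auto split: if_splits; presburger)
  then have "col_sum (Theta n a c) j \<le> sum h {..<n}"
    unfolding col_sum_def by (auto intro: sum_mono)
  also have "\<dots> \<le> a + 2 * c + 2 * int n + 3"
    using assms unfolding h_def by (simp add: sum.distrib)
  finally show ?thesis .
qed

lemma col_sum_thetaProd_Suc:
  "j < n \<Longrightarrow> col_sum (thetaProd n a c (Suc k)) j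
    = (\<Sum>i<n. col_sum (thetaProd n a c k) i * Theta n (a (Suc k)) (c (Suc k)) $$ (i, j))"
  by (simp add: col_sum_mult)

lemma col_sum_thetaProd_first_Suc:
  assumes "2 \<le> n"
  shows "col_sum (thetaProd n a c (Suc k)) 0
    = col_sum (thetaProd n a c k) 0 + col_sum (thetaProd n a c k) (n - 1)"
proof -
  let ?x = "col_sum (thetaProd n a c k)"
  have "0 < n" using assms by simp
  then have "col_sum (thetaProd n a c (Suc k)) 0
      = (\<Sum>i<n. (if i = 0 then ?x i else 0) + (if i = n - 1 then ?x i else 0))"
    unfolding col_sum_thetaProd_Suc[OF \<open>0 < n\<close>] using assms
    by (intro sum.cong) (auto simp: Theta_first_col)
  then show ?thesis
    using assms by (simp add: sum.distrib)
qed

lemma col_sum_thetaProd_nonneg: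
  assumes "\<And>j. 1 \<le> j \<Longrightarrow> 0 \<le> a j" "\<And>j. 1 \<le> j \<Longrightarrow> 0 \<le> c j" "s < n"
  shows "0 \<le> col_sum (thetaProd n a c k) s"
  using assms(3)
proof (induction k arbitrary: s)
  case 0
  then show ?case by (simp add: col_sum_one_mat)
next
  case (Suc k)
  then show ?case
    using assms(1,2) unfolding col_sum_thetaProd_Suc[OF Suc.prems]
    by (auto intro!: sum_nonneg mult_nonneg_nonneg Theta_nonneg)
qed

lemma col_sum_thetaProd_first_ge:
  assumes "2 \<le> n" "\<And>j. 1 \<le> j \<Longrightarrow> 0 \<le> a j" "\<And>j. 1 \<le> j \<Longrightarrow> 0 \<le> c j"
  shows "1 \<le> col_sum (thetaProd n a c k) 0"
proof (induction k)
  case 0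
  then show ?case using assms(1) by (simp add: col_sum_one_mat)
next
  case (Suc k)
  moreover have "0 \<le> col_sum (thetaProd n a c k) (n - 1)"
    using assms by (intro col_sum_thetaProd_nonneg) auto
  ultimately show ?case
    unfolding col_sum_thetaProd_first_Suc[OF assms(1)] by simp
qed

lemma col_sum_thetaProd_last_ge:
  assumes "2 \<le> n" "\<And>j. 1 \<le> j \<Longrightarrow> 0 \<le> a j" "\<And>j. 1 \<le> j \<Longrightarrow> 0 \<le> c j"
  shows "(\<Prod>j = 1..k. c j + 1) \<le> col_sum (thetaProd n a c k) (n - 1)"
proof (induction k)
  case 0
  then show ?case using assms(1) by (simp add: col_sum_one_mat)
next
  case (Suc k)
  let ?x = "col_sum (thetaProd n a c k)"
  have "(\<Prod>j = 1..Suc k. c j + 1) = (c (Suc k) + 1) * (\<Prod>j = 1..k. c j + 1)"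
    by (simp add: prod.cl_ivl_Suc)
  also have "\<dots> \<le> (c (Suc k) + 1) * ?x (n - 1)"
    using Suc assms by (simp add: mult_left_mono)
  also have "\<dots> = ?x (n - 1) * Theta n (a (Suc k)) (c (Suc k)) $$ (n - 1, n - 1)"
    unfolding Theta_last_last[OF assms(1)] by (rule mult.commute)
  also have "\<dots> \<le> col_sum (thetaProd n a c (Suc k)) (n - 1)"
    using assms col_sum_thetaProd_nonneg[of a c _ n k] unfolding thetaProd.simps
    by (intro col_sum_mult_ge) (auto intro!: Theta_nonneg)
  finally show ?case .
qed

lemma col_sum_thetaProd_le:
  assumes "\<And>j. 1 \<le> j \<Longrightarrow> 0 \<le> a j" "\<And>j. 1 \<le> j \<Longrightarrow> 0 \<le> c j" "s < n"
  shows "col_sum (thetaProd n a c k) s \<le> (\<Prod>j = 1..k. a j + 2 * c j + 2 * int n + 3)"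
  using assms(3)
proof (induction k arbitrary: s)
  case 0
  then show ?case by (simp add: col_sum_one_mat)
next
  case (Suc k)
  let ?M = "\<Prod>j = 1..k. a j + 2 * c j + 2 * int n + 3"
  have "col_sum (thetaProd n a c (Suc k)) s \<le> ?M * col_sum (Theta n (a (Suc k)) (c (Suc k))) s"
    using Suc assms col_sum_thetaProd_nonneg[of a c _ n k] unfolding thetaProd.simps
    by (intro col_sum_mult_le) (auto intro!: Theta_nonneg)
  also have "\<dots> \<le> ?M * (a (Suc k) + 2 * c (Suc k) + 2 * int n + 3)"
    using Suc.prems assms
    by (intro mult_left_mono col_sum_Theta_le prod_nonneg) (auto simp: add_nonneg_nonneg)
  finally show ?case by (simp add: prod.cl_ivl_Suc)
qed

lemma col_sum_thetaProd_last_Suc_le: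
  assumes "\<And>j. 1 \<le> j \<Longrightarrow> 0 \<le> a j" "\<And>j. 1 \<le> j \<Longrightarrow> 0 \<le> c j" "1 \<le> c (Suc k)" "0 < n"
  shows "col_sum (thetaProd n a c (Suc k)) (n - 1)
    \<le> (\<Prod>j = 1..k. a j + 2 * c j + 2 * int n + 3) * (int n * (c (Suc k) + 1))"
proof -
  let ?M = "\<Prod>j = 1..k. a j + 2 * c j + 2 * int n + 3"
  have "col_sum (thetaProd n a c (Suc k)) (n - 1)
      \<le> ?M * col_sum (Theta n (a (Suc k)) (c (Suc k))) (n - 1)"
    using assms col_sum_thetaProd_nonneg[of a c _ n k] col_sum_thetaProd_le[of a c _ n k]
    unfolding thetaProd.simps by (intro col_sum_mult_le) (auto intro!: Theta_nonneg)
  also have "\<dots> \<le> ?M * (int n * (c (Suc k) + 1))"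
    using assms
    by (intro mult_left_mono col_sum_Theta_last_le prod_nonneg) (auto simp: add_nonneg_nonneg)
  finally show ?thesis .
qed

locale theta_sequence =
  fixes n :: nat and p :: int and c :: "nat \<Rightarrow> int"
  assumes n_ge_4: "4 \<le> n" and p_ge: "int n + 1 \<le> p" and c_1_pos: "0 < c 1"
    and c_Suc: "\<And>j. 1 \<le> j \<Longrightarrow> c (Suc j) = p\<^sup>2 * c j"
begin

lemma p_ge_5: "5 \<le> p"
  using n_ge_4 p_ge by linarith

lemma c_ge_1: "1 \<le> j \<Longrightarrow> 1 \<le> c j"
proof (induction j rule: nat_induct_at_least)
  case base
  then show ?case using c_1_pos by simp
next
  case (Suc j)
  have "1 \<le> p\<^sup>2" using p_ge_5 by (simp add: one_le_power)
  then show ?case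
    using Suc mult_mono[of 1 "p\<^sup>2" 1 "c j"] by (simp add: c_Suc)
qed

lemma c_ge_p_sq: "2 \<le> j \<Longrightarrow> p\<^sup>2 \<le> c j"
  using c_Suc[of "j - 1"] c_ge_1[of "j - 1"] mult_left_mono[of 1 "c (j - 1)" "p\<^sup>2"]
  by (cases j) auto

lemma p_le_c:
  assumes "2 \<le> j" shows "p \<le> c j"
proof -
  have "p * 1 \<le> p * p" using p_ge_5 by (intro mult_left_mono) auto
  then show ?thesis using c_ge_p_sq[OF assms] by (simp add: power2_eq_square)
qed

lemma pc_lower_bounds:
  "1 \<le> j \<Longrightarrow> p \<le> p * c j \<and> 5 * c j \<le> p * c j \<and> (int n + 1) * c j \<le> p * c j"
  using c_ge_1[of j] p_ge_5 p_ge mult_left_mono[of 1 "c j" p] mult_right_mono[of 5 p "c j"]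
    mult_right_mono[of "int n + 1" p "c j"]
  by simp

lemma a_nonneg: "1 \<le> j \<Longrightarrow> 0 \<le> p * c j"
  using pc_lower_bounds[of j] p_ge_5 by linarith

lemma c_nonneg: "1 \<le> j \<Longrightarrow> 0 \<le> c j"
  using c_ge_1[of j] by linarith

lemma col_sum_bound_first_le: "p * c 1 + 2 * c 1 + 2 * int n + 3 \<le> 2 * (2 * (p * c 1))"
  using pc_lower_bounds[of 1] c_ge_1[of 1] p_ge by linarith

lemma col_sum_bound_le: "2 \<le> j \<Longrightarrow> p * c j + 2 * c j + 2 * int n + 3 \<le> 2 * (p * c j)"
  using pc_lower_bounds[of j] p_le_c[of j] p_ge by linarith

lemma prod_col_sum_bound_le:
  "(\<Prod>j = 1..k. p * c j + 2 * c j + 2 * int n + 3) \<le> 2 * (\<Prod>j = 1..k. 2 * (p * c j))"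
proof (cases "k = 0")
  case False
  have bound_nonneg: "0 \<le> p * c j + 2 * c j + 2 * int n + 3" if "1 \<le> j" for j
    using pc_lower_bounds[OF that] c_ge_1[OF that] p_ge_5 by linarith
  have "(\<Prod>j = 1..k. p * c j + 2 * c j + 2 * int n + 3)
      = (p * c 1 + 2 * c 1 + 2 * int n + 3) * (\<Prod>j = 2..k. p * c j + 2 * c j + 2 * int n + 3)"
    using False by (simp add: prod.atLeast_Suc_atMost numeral_2_eq_2)
  also have "\<dots> \<le> 2 * (2 * (p * c 1)) * (\<Prod>j = 2..k. 2 * (p * c j))"
    using col_sum_bound_first_le col_sum_bound_le bound_nonneg pc_lower_bounds[of 1] p_ge_5
    by (intro mult_mono prod_mono prod_nonneg) auto
  also have "\<dots> = 2 * (\<Prod>j = 1..k. 2 * (p * c j))"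
    using False by (simp add: prod.atLeast_Suc_atMost numeral_2_eq_2)
  finally show ?thesis .
qed simp

lemma prod_2pc_pos: "0 < (\<Prod>j = 1..k. 2 * (p * c j))"
  using a_nonneg pc_lower_bounds p_ge_5 by (intro prod_pos) fastforce

lemma first_col_bounds:
  assumes "1 \<le> k"
  shows "(\<Prod>j = 1..k-1. c j) < bval n (\<lambda>j. p * c j) c k 1
    \<and> bval n (\<lambda>j. p * c j) c k 1 < (\<Prod>j = 1..k. 2 * (p * c j))"
proof -
  obtain m where k: "k = Suc m" using assms by (cases k) auto
  have n: "2 \<le> n" using n_ge_4 by simp
  let ?x = "col_sum (thetaProd n (\<lambda>j. p * c j) c m)"
  let ?P = "\<Prod>j = 1..m. 2 * (p * c j)"
  have b: "bval n (\<lambda>j. p * c j) c k 1 = ?x 0 + ?x (n - 1)"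
    using bval_eq_col_sum[of 1 n] col_sum_thetaProd_first_Suc[OF n] n
    unfolding k by simp
  have "(\<Prod>j = 1..m. c j) \<le> (\<Prod>j = 1..m. c j + 1)"
    using c_nonneg by (intro prod_mono) auto
  also have "\<dots> \<le> ?x (n - 1)"
    by (rule col_sum_thetaProd_last_ge[of n "\<lambda>j. p * c j", OF n a_nonneg c_nonneg])
  finally have lower: "(\<Prod>j = 1..k-1. c j) < bval n (\<lambda>j. p * c j) c k 1"
    using col_sum_thetaProd_first_ge[of n "\<lambda>j. p * c j" c m, OF n a_nonneg c_nonneg] b k by simp
  have x_le: "?x s \<le> 2 * ?P" if "s < n" for s
    using col_sum_thetaProd_le[of "\<lambda>j. p * c j", OF a_nonneg c_nonneg that] prod_col_sum_bound_le
    by (rule order_trans)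
  have "bval n (\<lambda>j. p * c j) c k 1 \<le> 2 * ?P * 2"
    using b x_le[of 0] x_le[of "n - 1"] n by simp
  also have "\<dots> < ?P * (2 * (p * c k))"
    using prod_2pc_pos[of m] pc_lower_bounds[of k] p_ge_5 assms by (simp add: mult.commute)
  also have "\<dots> = (\<Prod>j = 1..k. 2 * (p * c j))"
    unfolding k by (simp add: prod.cl_ivl_Suc)
  finally show ?thesis using lower by simp
qed

lemma last_col_bounds:
  assumes "1 \<le> k"
  shows "(\<Prod>j = 1..k. c j) < bval n (\<lambda>j. p * c j) c k n
    \<and> bval n (\<lambda>j. p * c j) c k n < (\<Prod>j = 1..k. 2 * (p * c j))"
proof -
  obtain m where k: "k = Suc m" using assms by (cases k) auto
  have n: "2 \<le> n" using n_ge_4 by simp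
  let ?b = "bval n (\<lambda>j. p * c j) c k n"
  let ?P = "\<Prod>j = 1..m. 2 * (p * c j)"
  let ?B = "\<Prod>j = 1..m. p * c j + 2 * c j + 2 * int n + 3"
  have b: "?b = col_sum (thetaProd n (\<lambda>j. p * c j) c k) (n - 1)"
    using bval_eq_col_sum[of n n] n by simp
  have "(\<Prod>j = 1..k. c j) < (\<Prod>j = 1..k. c j + 1)"
    using assms c_nonneg c_ge_1 by (intro prod_mono_strict[of k]) auto
  also have "\<dots> \<le> ?b"
    unfolding b by (rule col_sum_thetaProd_last_ge[of n "\<lambda>j. p * c j", OF n a_nonneg c_nonneg])
  finally have lower: "(\<Prod>j = 1..k. c j) < ?b" .
  have "?b \<le> ?B * (int n * (c k + 1))"
    unfolding b unfolding k using n
    by (intro col_sum_thetaProd_last_Suc_le[of "\<lambda>j. p * c j"] a_nonneg c_nonneg c_ge_1) auto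
  also have "\<dots> < ?P * (2 * (p * c k))"
  proof (cases "m = 0")
    case True
    have "int n * 1 \<le> int n * c k" using c_ge_1 assms by (intro mult_left_mono) auto
    then show ?thesis using True k pc_lower_bounds[of k] c_ge_1[of k] by (simp add: algebra_simps)
  next
    case False
    have "int n * (c k + 1) < p * c k"
      using pc_lower_bounds[of k] p_le_c[of k] p_ge False k by (simp add: algebra_simps)
    then have "2 * ?P * (int n * (c k + 1)) < 2 * ?P * (p * c k)"
      using prod_2pc_pos[of m] by (intro mult_strict_left_mono) auto
    moreover have "?B * (int n * (c k + 1)) \<le> 2 * ?P * (int n * (c k + 1))"
      using prod_col_sum_bound_le c_ge_1[of k] assms by (intro mult_right_mono) auto
    ultimately show ?thesis by (simp add: mult_ac)
  qed
  also have "\<dots> = (\<Prod>j = 1..k. 2 * (p * c j))"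
    unfolding k by (simp add: prod.cl_ivl_Suc)
  finally show ?thesis using lower by simp
qed

end

theorem mainTheorem11:
  fixes n :: nat and p :: int and c :: "nat \<Rightarrow> int" and k :: nat
  assumes "even n" and "n \<ge> 4"
    and "p \<ge> int n + 1"
    and "c 1 > 0"
    and "\<And>j. j \<ge> 1 \<Longrightarrow> c (Suc j) = p ^ 2 * c j"
    and "k \<ge> 1"
  shows "(\<Prod>j = 1..k-1. c j) < bval n (\<lambda>j. p * c j) c k 1
         \<and> bval n (\<lambda>j. p * c j) c k 1 < (\<Prod>j = 1..k. 2 * (p * c j))
         \<and> (\<Prod>j = 1..k. c j) < bval n (\<lambda>j. p * c j) c k n
         \<and> bval n (\<lambda>j. p * c j) c k n < (\<Prod>j = 1..k. 2 * (p * c j))"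
proof -
  interpret theta_sequence n p c
    using assms(2-5) by unfold_locales
  show ?thesis
    using first_col_bounds[OF assms(6)] last_col_bounds[OF assms(6)] by blast
qed

end
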